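(* Let $n\ge3$ and let $\mathcal{G}$ be the directed line graph on nodes $\{1,\dots,n\}$ with edges $(i,i+1)$ and $(i+1,i)$ for $i=1,\dots,n-1$ together with self-loops $(i,i)$ at every node, and let $\tau\in\mathbb{Z}$ with $n-1\le\tau\le 2n-3$. If $P^*$ is an optimal solution of $\max_P\min_{i,j}\mathbb{P}(T_{ij}(P)\le\tau)$ over all Markov chain strategies $P$ conforming to $\mathcal{G}$, then $\mathbb{P}(T_{1n}(P^* )\le\tau)=\mathbb{P}(T_{n1}(P^* )\le\tau)$.
   Context: A Markov chain strategy conforming to $\mathcal{G}=(V,\mathcal{E})$ is a row-stochastic nonnegative $P=(p_{ij})$ with $p_{ij}=0$ for $(i,j)\notin\mathcal{E}$. For the Markov chain $(X_k)$ with transition matrix $P$, $T_{ij}=\min\{k\ge1:X_k=j\}$ given $X_0=i$. *)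

theory Defs
  imports Complex_Main
begin

text \<open>Nodes are 1..n. A transition matrix is a function nat => nat => real;
  only its entries on {1..n} x {1..n} matter.\<close>

definition line_graph_edges :: "nat \<Rightarrow> (nat \<times> nat) set" where
  "line_graph_edges n =
     {(i, i) | i. 1 \<le> i \<and> i \<le> n}
   \<union> {(i, i + 1) | i. 1 \<le> i \<and> i \<le> n - 1}
   \<union> {(i + 1, i) | i. 1 \<le> i \<and> i \<le> n - 1}"

definition conforming :: "nat set \<Rightarrow> (nat \<times> nat) set \<Rightarrow> (nat \<Rightarrow> nat \<Rightarrow> real) \<Rightarrow> bool" where
  "conforming V E P \<longleftrightarrow>
     (\<forall>i\<in>V. \<forall>j\<in>V. P i j \<ge> 0) \<and>
     (\<forall>i\<in>V. (\<Sum>j\<in>V. P i j) = 1) \<and>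
     (\<forall>i\<in>V. \<forall>j\<in>V. (i, j) \<notin> E \<longrightarrow> P i j = 0)"

text \<open>hit_prob V P j k i = Prob(T_ij <= k) for the chain started at X_0 = i,
  where T_ij = min {k >= 1. X_k = j}; computed by first-step analysis.\<close>
fun hit_prob :: "nat set \<Rightarrow> (nat \<Rightarrow> nat \<Rightarrow> real) \<Rightarrow> nat \<Rightarrow> nat \<Rightarrow> nat \<Rightarrow> real" where
  "hit_prob V P j 0 i = 0"
| "hit_prob V P j (Suc k) i =
     (\<Sum>l\<in>V. P i l * (if l = j then 1 else hit_prob V P j k l))"

definition min_hit :: "nat set \<Rightarrow> (nat \<Rightarrow> nat \<Rightarrow> real) \<Rightarrow> nat \<Rightarrow> real" where
  "min_hit V P \<tau> = Min {hit_prob V P j \<tau> i | i j. i \<in> V \<and> j \<in> V}"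

end

theory Submission
  imports Defs
begin

text \<open>Let f and g be the probabilities that the walk from 1 hits n, and the walk from n hits 1,
  within tau steps. A walk on the line moves to neighbours only, so a walk from i to some j > i
  visits every node in between, and starting further left only delays it; hence every
  P(T_ij \<le> tau) with i < j is at least f, by the mirror image i \<mapsto> n + 1 - i every one with
  i > j is at least g, and return probabilities are handled by the first step. So the objective
  is exactly min f g. If f < g, mixing a small amount e of the deterministic right shift into the
  strategy strictly increases f, because tau \<ge> n - 1 leaves the shift enough time to reach n,
  while g depends continuously on e and stays above f. The mixed strategy is strictly better,
  hence f = g at an optimum.\<close>

declare hit_prob.simps(2) [simp del]

lemma conforming_row_avg_mono:
  assumes "conforming V E P" "i \<in> V"
    and "\<And>l. l \<in> V \<Longrightarrow> P i l \<noteq> 0 \<Longrightarrow> x l \<le> y l"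
  shows "(\<Sum>l\<in>V. P i l * x l) \<le> (\<Sum>l\<in>V. P i l * y l)"
proof (rule sum_mono)
  fix l assume "l \<in> V"
  with assms show "P i l * x l \<le> P i l * y l"
    by (cases "P i l = 0") (auto simp: conforming_def intro: mult_left_mono)
qed

lemma conforming_row_avg_const:
  assumes "conforming V E P" "i \<in> V"
  shows "(\<Sum>l\<in>V. P i l * c) = c"
  using assms by (simp add: conforming_def flip: sum_distrib_right)

lemma conforming_row_avg_le:
  assumes "conforming V E P" "i \<in> V" "\<And>l. l \<in> V \<Longrightarrow> P i l \<noteq> 0 \<Longrightarrow> x l \<le> c"
  shows "(\<Sum>l\<in>V. P i l * x l) \<le> c"
  using conforming_row_avg_mono[of V E P i x "\<lambda>_. c"] assms
  by (simp add: conforming_row_avg_const)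

lemma conforming_row_avg_ge:
  assumes "conforming V E P" "i \<in> V" "\<And>l. l \<in> V \<Longrightarrow> P i l \<noteq> 0 \<Longrightarrow> c \<le> x l"
  shows "c \<le> (\<Sum>l\<in>V. P i l * x l)"
  using conforming_row_avg_mono[of V E P i "\<lambda>_. c" x] assms
  by (simp add: conforming_row_avg_const)

lemma hit_prob_nonneg:
  assumes "conforming V E P" "i \<in> V"
  shows "0 \<le> hit_prob V P j k i"
  using assms(2)
proof (induction k arbitrary: i)
  case (Suc k)
  then show ?case
    unfolding hit_prob.simps by (intro conforming_row_avg_ge[OF assms(1)]) auto
qed simp

lemma hit_prob_le_1:
  assumes "conforming V E P" "i \<in> V"
  shows "hit_prob V P j k i \<le> 1"
  using assms(2)
proof (induction k arbitrary: i)
  case (Suc k)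
  then show ?case
    unfolding hit_prob.simps by (intro conforming_row_avg_le[OF assms(1)]) auto
qed simp

lemma hit_prob_le_Suc:
  assumes "conforming V E P" "i \<in> V"
  shows "hit_prob V P j k i \<le> hit_prob V P j (Suc k) i"
  using assms(2)
proof (induction k arbitrary: i)
  case 0
  then show ?case
    unfolding hit_prob.simps(2) by (intro conforming_row_avg_ge[OF assms(1)]) auto
next
  case (Suc k)
  then show ?case
    by (simp only: hit_prob.simps, intro conforming_row_avg_mono[OF assms(1)]) auto
qed

lemma hit_prob_mono:
  assumes "conforming V E P" "i \<in> V" "k \<le> k'"
  shows "hit_prob V P j k i \<le> hit_prob V P j k' i"
  using lift_Suc_mono_le[of "\<lambda>k. hit_prob V P j k i"] hit_prob_le_Suc[OF assms(1,2)] assms(3)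
  by blast

lemma min_hit_le_hit_prob:
  assumes "finite V" "i \<in> V" "j \<in> V"
  shows "min_hit V P \<tau> \<le> hit_prob V P j \<tau> i"
  unfolding min_hit_def using assms by (intro Min_le finite_image_set2) auto

text \<open>Unlike \<^const>\<open>hit_prob\<close>, this counts time 0: the walk started at j has reached j.\<close>
definition reach_prob :: "nat set \<Rightarrow> (nat \<Rightarrow> nat \<Rightarrow> real) \<Rightarrow> nat \<Rightarrow> nat \<Rightarrow> nat \<Rightarrow> real" where
  "reach_prob V P j k i = (if i = j then 1 else hit_prob V P j k i)"

lemma hit_prob_Suc_reach_prob:
  "hit_prob V P j (Suc k) i = (\<Sum>l\<in>V. P i l * reach_prob V P j k l)"
  by (simp only: hit_prob.simps reach_prob_def)

lemma reach_prob_nonneg: "conforming V E P \<Longrightarrow> i \<in> V \<Longrightarrow> 0 \<le> reach_prob V P j k i"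
  using hit_prob_nonneg by (simp add: reach_prob_def)

lemma reach_prob_le_1: "conforming V E P \<Longrightarrow> i \<in> V \<Longrightarrow> reach_prob V P j k i \<le> 1"
  using hit_prob_le_1 by (simp add: reach_prob_def)

lemma reach_prob_le_Suc:
  "conforming V E P \<Longrightarrow> i \<in> V \<Longrightarrow> reach_prob V P j k i \<le> reach_prob V P j (Suc k) i"
  using hit_prob_le_Suc by (simp add: reach_prob_def)

lemma hit_prob_Suc_le_row_avg_reach_prob:
  assumes "conforming V E P" "i \<in> V"
    and "\<And>l. l \<in> V \<Longrightarrow> hit_prob V P j k l \<le> hit_prob V Q j k l"
  shows "hit_prob V P j (Suc k) i \<le> (\<Sum>l\<in>V. P i l * reach_prob V Q j k l)"
  unfolding hit_prob_Suc_reach_prob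
  using assms by (intro conforming_row_avg_mono) (auto simp: reach_prob_def)

section \<open>Strategies on the line graph\<close>

abbreviation line_strategy :: "nat \<Rightarrow> (nat \<Rightarrow> nat \<Rightarrow> real) \<Rightarrow> bool" where
  "line_strategy n P \<equiv> conforming {1..n} (line_graph_edges n) P"

lemma line_graph_edges_iff:
  assumes "i \<in> {1..n}" "j \<in> {1..n}"
  shows "(i, j) \<in> line_graph_edges n \<longleftrightarrow> j = i \<or> j = i + 1 \<or> i = j + 1"
  using assms unfolding line_graph_edges_def by auto

lemma line_strategy_step:
  assumes "line_strategy n P" "i \<in> {1..n}" "l \<in> {1..n}" "P i l \<noteq> 0"
  shows "l = i \<or> l = i + 1 \<or> i = l + 1"
  using assms line_graph_edges_iff unfolding conforming_def by blast

text \<open>On its way from l < n to n the walk must pass l + 1, and getting there takes a step.\<close>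
lemma hit_prob_Suc_le_reach_prob_next:
  assumes P: "line_strategy n P" and "1 \<le> l" "l < n"
  shows "hit_prob {1..n} P n (Suc k) l \<le> reach_prob {1..n} P n k (l + 1)"
  using assms(2,3)
proof (induction k arbitrary: l)
  case 0
  show ?case unfolding hit_prob_Suc_reach_prob
  proof (rule conforming_row_avg_le[OF P])
    fix x assume x: "x \<in> {1..n}" "P l x \<noteq> 0"
    with 0 P have "x = l \<or> x = l + 1 \<or> l = x + 1" by (intro line_strategy_step) auto
    with 0 show "reach_prob {1..n} P n 0 x \<le> reach_prob {1..n} P n 0 (l + 1)"
      using reach_prob_nonneg[OF P, of "l + 1" n 0] by (auto simp: reach_prob_def)
  qed (use 0 in auto)
next
  case (Suc k)
  have adjacent: "reach_prob {1..n} P n (Suc k) m \<le> reach_prob {1..n} P n (Suc k) (m + 1)"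
    if "1 \<le> m" "m < n" for m
  proof -
    have "reach_prob {1..n} P n (Suc k) m = hit_prob {1..n} P n (Suc k) m"
      using that by (simp add: reach_prob_def)
    also have "\<dots> \<le> reach_prob {1..n} P n k (m + 1)"
      using Suc.IH that .
    also have "\<dots> \<le> reach_prob {1..n} P n (Suc k) (m + 1)"
      using that by (intro reach_prob_le_Suc[OF P]) auto
    finally show ?thesis .
  qed
  show ?case unfolding hit_prob_Suc_reach_prob
  proof (rule conforming_row_avg_le[OF P])
    fix x assume x: "x \<in> {1..n}" "P l x \<noteq> 0"
    with Suc.prems P have "x = l \<or> x = l + 1 \<or> l = x + 1" by (intro line_strategy_step) auto
    then show "reach_prob {1..n} P n (Suc k) x \<le> reach_prob {1..n} P n (Suc k) (l + 1)"
      using adjacent[of l] adjacent[of x] Suc.prems x(1) by auto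
  qed (use Suc.prems in auto)
qed

lemma reach_prob_le_next:
  assumes P: "line_strategy n P" and "1 \<le> l" "l < n"
  shows "reach_prob {1..n} P n k l \<le> reach_prob {1..n} P n k (l + 1)"
proof (cases k)
  case 0
  then show ?thesis
    using assms reach_prob_nonneg[OF P, of "l + 1" n 0] by (simp add: reach_prob_def)
next
  case (Suc k')
  have "reach_prob {1..n} P n k l = hit_prob {1..n} P n (Suc k') l"
    using assms Suc by (simp add: reach_prob_def)
  also have "\<dots> \<le> reach_prob {1..n} P n k' (l + 1)"
    using hit_prob_Suc_le_reach_prob_next assms .
  also have "\<dots> \<le> reach_prob {1..n} P n k (l + 1)"
    unfolding Suc using assms by (intro reach_prob_le_Suc[OF P]) auto
  finally show ?thesis .
qed

lemma reach_prob_mono_start: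
  assumes P: "line_strategy n P" and "1 \<le> l" "l \<le> l'" "l' \<le> n"
  shows "reach_prob {1..n} P n k l \<le> reach_prob {1..n} P n k l'"
  using assms(3,4)
proof (induction l' rule: dec_induct)
  case (step m)
  then show ?case using reach_prob_le_next[OF P, of m k] assms(2) by simp
qed simp

lemma hit_prob_eq_0_if_far:
  assumes P: "line_strategy n P" and "i \<in> {1..n}" "m + i < n"
  shows "hit_prob {1..n} P n m i = 0"
  using assms(2,3)
proof (induction m arbitrary: i)
  case (Suc m)
  show ?case unfolding hit_prob_Suc_reach_prob
  proof (intro sum.neutral ballI)
    fix l assume l: "l \<in> {1..n}"
    show "P i l * reach_prob {1..n} P n m l = 0"
    proof (cases "P i l = 0")
      case False
      with P Suc.prems l have "l = i \<or> l = i + 1 \<or> i = l + 1" by (intro line_strategy_step) auto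
      with Suc l show ?thesis by (auto simp: reach_prob_def)
    qed simp
  qed
qed simp

text \<open>A walk from i to n passes j first and then needs at least n - j further steps.\<close>
lemma hit_prob_le_hit_prob_between:
  assumes P: "line_strategy n P" and "1 \<le> i" "i < j" "j \<le> n"
  shows "hit_prob {1..n} P n (k + (n - j)) i \<le> hit_prob {1..n} P j k i"
  using assms(2,3)
proof (induction k arbitrary: i)
  case 0
  then show ?case using hit_prob_eq_0_if_far[OF P, of i "n - j"] assms(4) by simp
next
  case (Suc k)
  have "hit_prob {1..n} P n (Suc k + (n - j)) i
      = (\<Sum>l\<in>{1..n}. P i l * reach_prob {1..n} P n (k + (n - j)) l)"
    by (simp only: add_Suc hit_prob_Suc_reach_prob)
  also have "\<dots> \<le> (\<Sum>l\<in>{1..n}. P i l * (if l = j then 1 else hit_prob {1..n} P j k l))"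
  proof (rule conforming_row_avg_mono[OF P])
    fix l assume l: "l \<in> {1..n}" "P i l \<noteq> 0"
    have "i \<in> {1..n}"
      using Suc.prems assms(4) by simp
    with Suc.prems have "l \<le> j"
      using line_strategy_step[OF P _ l] by fastforce
    show "reach_prob {1..n} P n (k + (n - j)) l \<le> (if l = j then 1 else hit_prob {1..n} P j k l)"
    proof (cases "l = j")
      case True
      then show ?thesis using reach_prob_le_1[OF P l(1)] by simp
    next
      case False
      with \<open>l \<le> j\<close> assms(4) have "l < j" "l \<noteq> n"
        by auto
      with Suc.IH[of l] l False show ?thesis
        by (simp add: reach_prob_def)
    qed
  qed (use Suc.prems assms(4) in auto)
  also have "\<dots> = hit_prob {1..n} P j (Suc k) i"
    by (simp only: hit_prob.simps)
  finally show ?case .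
qed

lemma hit_prob_from_1_le_hit_prob_rightward:
  assumes P: "line_strategy n P" and "1 \<le> i" "i < j" "j \<le> n" "k \<le> t + (n - j)"
  shows "hit_prob {1..n} P n k 1 \<le> hit_prob {1..n} P j t i"
proof -
  have "hit_prob {1..n} P n k 1 = reach_prob {1..n} P n k 1"
    using assms by (simp add: reach_prob_def)
  also have "\<dots> \<le> reach_prob {1..n} P n k i"
    using assms by (intro reach_prob_mono_start[OF P]) auto
  also have "\<dots> = hit_prob {1..n} P n k i"
    using assms by (simp add: reach_prob_def)
  also have "\<dots> \<le> hit_prob {1..n} P n (t + (n - j)) i"
    using assms by (intro hit_prob_mono[OF P]) auto
  also have "\<dots> \<le> hit_prob {1..n} P j t i"
    using assms by (intro hit_prob_le_hit_prob_between[OF P])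
  finally show ?thesis .
qed

lemma hit_prob_from_1_Suc_le_hit_prob_from_left:
  assumes P: "line_strategy n P" and "3 \<le> n" "2 \<le> i" "i \<le> n"
  shows "hit_prob {1..n} P n (Suc t) 1 \<le> hit_prob {1..n} P i t (i - 1)"
proof (cases "i < n")
  case True
  then show ?thesis
    using assms by (intro hit_prob_from_1_le_hit_prob_rightward[OF P]) auto
next
  case False
  have "hit_prob {1..n} P n (Suc t) 1 \<le> reach_prob {1..n} P n t (1 + 1)"
    using assms by (intro hit_prob_Suc_le_reach_prob_next[OF P]) auto
  also have "\<dots> \<le> reach_prob {1..n} P n t (n - 1)"
    using assms by (intro reach_prob_mono_start[OF P]) auto
  also have "\<dots> = hit_prob {1..n} P n t (n - 1)"
    using assms(2) by (auto simp: reach_prob_def)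
  finally show ?thesis
    using False assms(4) by simp
qed

section \<open>Mirror symmetry\<close>

definition reflect :: "nat \<Rightarrow> (nat \<Rightarrow> nat \<Rightarrow> real) \<Rightarrow> nat \<Rightarrow> nat \<Rightarrow> real" where
  "reflect n P i j = P (n + 1 - i) (n + 1 - j)"

lemma sum_reflect:
  fixes n :: nat
  shows "(\<Sum>l\<in>{1..n}. h l) = (\<Sum>l\<in>{1..n}. h (n + 1 - l))"
  by (rule sum.reindex_bij_witness[of _ "\<lambda>l. n + 1 - l" "\<lambda>l. n + 1 - l"]) auto

lemma line_strategy_reflect:
  assumes P: "line_strategy n P"
  shows "line_strategy n (reflect n P)"
  unfolding conforming_def
proof (intro conjI ballI impI)
  fix i j assume "i \<in> {1..n}" "j \<in> {1..n}"
  then have "n + 1 - i \<in> {1..n}" "n + 1 - j \<in> {1..n}"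
    by auto
  with P show "0 \<le> reflect n P i j"
    by (simp add: conforming_def reflect_def)
next
  fix i assume "i \<in> {1..n}"
  then have i: "n + 1 - i \<in> {1..n}"
    by auto
  have "(\<Sum>j\<in>{1..n}. reflect n P i j) = (\<Sum>j\<in>{1..n}. P (n + 1 - i) j)"
    by (subst sum_reflect) (auto simp: reflect_def intro: sum.cong)
  also have "\<dots> = 1"
    using P i by (simp add: conforming_def)
  finally show "(\<Sum>j\<in>{1..n}. reflect n P i j) = 1" .
next
  fix i j assume ij: "i \<in> {1..n}" "j \<in> {1..n}" "(i, j) \<notin> line_graph_edges n"
  then have ij': "n + 1 - i \<in> {1..n}" "n + 1 - j \<in> {1..n}"
    by auto
  with ij have "(n + 1 - i, n + 1 - j) \<notin> line_graph_edges n"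
    by (auto simp: line_graph_edges_iff)
  with P ij' show "reflect n P i j = 0"
    by (simp add: conforming_def reflect_def)
qed

lemma hit_prob_reflect:
  assumes "i \<in> {1..n}" "j \<in> {1..n}"
  shows "hit_prob {1..n} (reflect n P) (n + 1 - j) k (n + 1 - i) = hit_prob {1..n} P j k i"
  using assms(1)
proof (induction k arbitrary: i)
  case (Suc k)
  have "hit_prob {1..n} (reflect n P) (n + 1 - j) (Suc k) (n + 1 - i)
      = (\<Sum>l\<in>{1..n}. reflect n P (n + 1 - i) (n + 1 - l) *
           (if n + 1 - l = n + 1 - j then 1
            else hit_prob {1..n} (reflect n P) (n + 1 - j) k (n + 1 - l)))"
    by (simp only: hit_prob.simps) (rule sum_reflect)
  also have "\<dots> = (\<Sum>l\<in>{1..n}. P i l * (if l = j then 1 else hit_prob {1..n} P j k l))"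
  proof (rule sum.cong)
    fix l assume l: "l \<in> {1..n}"
    then have "n + 1 - l = n + 1 - j \<longleftrightarrow> l = j" "reflect n P (n + 1 - i) (n + 1 - l) = P i l"
      using Suc.prems assms(2) by (auto simp: reflect_def)
    with Suc.IH[OF l] show "reflect n P (n + 1 - i) (n + 1 - l) *
        (if n + 1 - l = n + 1 - j then 1
         else hit_prob {1..n} (reflect n P) (n + 1 - j) k (n + 1 - l))
      = P i l * (if l = j then 1 else hit_prob {1..n} P j k l)"
      by simp
  qed simp
  also have "\<dots> = hit_prob {1..n} P j (Suc k) i"
    by (simp only: hit_prob.simps)
  finally show ?case .
qed simp

lemma hit_prob_reflect_ends:
  assumes "1 \<le> n"
  shows "hit_prob {1..n} (reflect n P) n k 1 = hit_prob {1..n} P 1 k n"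
    and "hit_prob {1..n} (reflect n P) 1 k n = hit_prob {1..n} P n k 1"
  using hit_prob_reflect[where i = n and n = n and j = 1]
    hit_prob_reflect[where i = 1 and n = n and j = n] assms
  by auto

section \<open>Lower bound for the objective\<close>

text \<open>After one step the walk is at i - 1, i or i + 1. Returning from i - 1 is compared with the
  walk from 1 to n, returning from i + 1 with the mirrored walk from n to 1.\<close>
lemma min_ends_le_hit_prob_return:
  assumes P: "line_strategy n P" and "3 \<le> n" "i \<in> {1..n}"
  shows "min (hit_prob {1..n} P n (Suc t) 1) (hit_prob {1..n} P 1 (Suc t) n)
    \<le> hit_prob {1..n} P i (Suc t) i"
  unfolding hit_prob.simps(2)[of "{1..n}" P i t i]
proof (rule conforming_row_avg_ge[OF P assms(3)])
  fix l assume l: "l \<in> {1..n}" "P i l \<noteq> 0"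
  have "hit_prob {1..n} P 1 (Suc t) n \<le> hit_prob {1..n} P i t l" if "l = i + 1"
  proof -
    have "hit_prob {1..n} (reflect n P) n (Suc t) 1
        \<le> hit_prob {1..n} (reflect n P) (n + 1 - i) t (n + 1 - i - 1)"
      using assms l that
      by (intro hit_prob_from_1_Suc_le_hit_prob_from_left line_strategy_reflect[OF P]) auto
    moreover have "n + 1 - i - 1 = n + 1 - l"
      using that by simp
    ultimately show ?thesis
      using hit_prob_reflect[where i = l and j = i and k = t] hit_prob_reflect_ends(1) l assms(2,3)
      by simp
  qed
  moreover have "hit_prob {1..n} P n (Suc t) 1 \<le> hit_prob {1..n} P i t l" if "i = l + 1"
    using hit_prob_from_1_Suc_le_hit_prob_from_left[OF P assms(2), of i t] that l assms(3) by auto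
  moreover have "hit_prob {1..n} P n (Suc t) 1 \<le> 1"
    using hit_prob_le_1[OF P] assms by simp
  ultimately show "min (hit_prob {1..n} P n (Suc t) 1) (hit_prob {1..n} P 1 (Suc t) n)
      \<le> (if l = i then 1 else hit_prob {1..n} P i t l)"
    using line_strategy_step[OF P assms(3) l] by auto
qed

lemma min_ends_le_hit_prob:
  assumes P: "line_strategy n P" and "3 \<le> n" "i \<in> {1..n}" "j \<in> {1..n}"
  shows "min (hit_prob {1..n} P n (Suc t) 1) (hit_prob {1..n} P 1 (Suc t) n)
    \<le> hit_prob {1..n} P j (Suc t) i"
proof (cases i j rule: linorder_cases)
  case less
  then show ?thesis
    using hit_prob_from_1_le_hit_prob_rightward[OF P, of i j "Suc t" "Suc t"] assms
    by (auto intro: min.coboundedI1)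
next
  case equal
  then show ?thesis
    using min_ends_le_hit_prob_return[OF assms(1-3)] by simp
next
  case greater
  then have "hit_prob {1..n} (reflect n P) n (Suc t) 1
      \<le> hit_prob {1..n} (reflect n P) (n + 1 - j) (Suc t) (n + 1 - i)"
    using assms by (intro hit_prob_from_1_le_hit_prob_rightward line_strategy_reflect[OF P]) auto
  then show ?thesis
    using hit_prob_reflect[where i = i and j = j and k = "Suc t"] hit_prob_reflect_ends(1) assms
    by (auto intro: min.coboundedI2)
qed

lemma min_ends_le_min_hit:
  assumes P: "line_strategy n P" and "3 \<le> n" "1 \<le> \<tau>"
  shows "min (hit_prob {1..n} P n \<tau> 1) (hit_prob {1..n} P 1 \<tau> n) \<le> min_hit {1..n} P \<tau>"
proof -
  obtain t where t: "\<tau> = Suc t"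
    using assms(3) by (cases \<tau>) auto
  have "finite {hit_prob {1..n} P j \<tau> i | i j. i \<in> {1..n} \<and> j \<in> {1..n}}"
    by (rule finite_image_set2) auto
  moreover have "{hit_prob {1..n} P j \<tau> i | i j. i \<in> {1..n} \<and> j \<in> {1..n}} \<noteq> {}"
    using assms(2) by (auto intro!: exI[of _ "1::nat"])
  ultimately show ?thesis
    unfolding min_hit_def using min_ends_le_hit_prob[OF P assms(2)] t
    by (subst Min_ge_iff) auto
qed

section \<open>Mixing in the right shift\<close>

lemma le_convex_comb:
  fixes x a b e :: real
  assumes "x \<le> a" "x \<le> b" "0 \<le> e" "e \<le> 1"
  shows "x \<le> (1 - e) * a + e * b"
proof -
  have "(1 - e) * x \<le> (1 - e) * a" "e * x \<le> e * b"
    using assms by (auto intro: mult_left_mono)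
  then show ?thesis by (simp add: algebra_simps)
qed

lemma less_convex_comb:
  fixes x a b e :: real
  assumes "x \<le> a" "x < b" "0 < e" "e \<le> 1"
  shows "x < (1 - e) * a + e * b"
proof -
  have "(1 - e) * x \<le> (1 - e) * a" "e * x < e * b"
    using assms by (auto intro: mult_left_mono)
  then show ?thesis by (simp add: algebra_simps)
qed

definition mix :: "(nat \<Rightarrow> nat \<Rightarrow> real) \<Rightarrow> (nat \<Rightarrow> nat \<Rightarrow> real) \<Rightarrow> real \<Rightarrow> nat \<Rightarrow> nat \<Rightarrow> real"
  where "mix P Q e i j = (1 - e) * P i j + e * Q i j"

lemma mix_0: "mix P Q 0 = P"
  by (simp add: mix_def fun_eq_iff)

lemma sum_mix:
  "(\<Sum>l\<in>A. mix P Q e i l * w l) = (1 - e) * (\<Sum>l\<in>A. P i l * w l) + e * (\<Sum>l\<in>A. Q i l * w l)"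
  by (simp add: mix_def distrib_right sum.distrib sum_distrib_left mult.assoc)

lemma conforming_mix:
  assumes "conforming V E P" "conforming V E Q" "0 \<le> e" "e \<le> 1"
  shows "conforming V E (mix P Q e)"
  using assms by (auto simp: conforming_def mix_def sum.distrib simp flip: sum_distrib_left)

lemma isCont_hit_prob_mix: "isCont (\<lambda>e. hit_prob V (mix P Q e) j k i) x"
proof (induction k arbitrary: i)
  case (Suc k)
  have "isCont (\<lambda>e. if l = j then 1 else hit_prob V (mix P Q e) j k l) x" for l
    using Suc by (cases "l = j") auto
  then show ?case
    unfolding hit_prob.simps mix_def by (intro continuous_intros)
qed simp

definition shift_right :: "nat \<Rightarrow> nat \<Rightarrow> nat \<Rightarrow> real" where
  "shift_right n i j = (if j = min (i + 1) n then 1 else 0)"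

lemma sum_shift_right:
  assumes "i \<in> {1..n}"
  shows "(\<Sum>l\<in>{1..n}. shift_right n i l * x l) = x (min (i + 1) n)"
proof -
  have "(\<Sum>l\<in>{1..n}. shift_right n i l * x l) = (\<Sum>l\<in>{1..n}. if l = min (i + 1) n then x l else 0)"
    by (intro sum.cong) (auto simp: shift_right_def)
  also have "\<dots> = x (min (i + 1) n)"
    using assms by (subst sum.delta) auto
  finally show ?thesis .
qed

lemma line_strategy_shift_right: "line_strategy n (shift_right n)"
  unfolding conforming_def
proof (intro conjI ballI impI)
  fix i j assume "i \<in> {1..n}" "j \<in> {1..n}"
  then show "0 \<le> shift_right n i j"
    by (simp add: shift_right_def)
next
  fix i assume "i \<in> {1..n}"
  then show "(\<Sum>j\<in>{1..n}. shift_right n i j) = 1"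
    using sum_shift_right[of i n "\<lambda>_. 1"] by simp
next
  fix i j assume "i \<in> {1..n}" "j \<in> {1..n}" "(i, j) \<notin> line_graph_edges n"
  then show "shift_right n i j = 0"
    by (auto simp: shift_right_def line_graph_edges_iff)
qed

lemma hit_prob_mix_shift_right_Suc:
  assumes "i \<in> {1..n}"
  shows "hit_prob {1..n} (mix P (shift_right n) e) n (Suc k) i =
    (1 - e) * (\<Sum>l\<in>{1..n}. P i l * reach_prob {1..n} (mix P (shift_right n) e) n k l)
    + e * reach_prob {1..n} (mix P (shift_right n) e) n k (min (i + 1) n)"
  unfolding hit_prob_Suc_reach_prob sum_mix sum_shift_right[OF assms] ..

lemma hit_prob_le_mix_shift_right:
  assumes P: "line_strategy n P" and "0 \<le> e" "e \<le> 1" "i \<in> {1..n}"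
  shows "hit_prob {1..n} P n k i \<le> hit_prob {1..n} (mix P (shift_right n) e) n k i"
  using assms(4)
proof (induction k arbitrary: i)
  case (Suc k)
  let ?Q = "mix P (shift_right n) e"
  let ?h = "hit_prob {1..n} P n (Suc k) i"
  have avg: "?h \<le> (\<Sum>l\<in>{1..n}. P i l * reach_prob {1..n} ?Q n k l)"
    using Suc.IH by (intro hit_prob_Suc_le_row_avg_reach_prob[OF P Suc.prems])
  have "?h \<le> reach_prob {1..n} P n k (min (i + 1) n)"
  proof (cases "i < n")
    case True
    then show ?thesis
      using hit_prob_Suc_le_reach_prob_next[OF P] Suc.prems by simp
  next
    case False
    then show ?thesis
      using hit_prob_le_1[OF P Suc.prems] by (simp add: reach_prob_def)
  qed
  also have "\<dots> \<le> reach_prob {1..n} ?Q n k (min (i + 1) n)"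
    using Suc.IH[of "min (i + 1) n"] Suc.prems by (auto simp: reach_prob_def)
  finally have "?h \<le> reach_prob {1..n} ?Q n k (min (i + 1) n)" .
  from avg this assms(2,3) show ?case
    unfolding hit_prob_mix_shift_right_Suc[OF Suc.prems] by (rule le_convex_comb)
qed simp

lemma hit_prob_less_mix_shift_right:
  assumes P: "line_strategy n P" and "0 < e" "e \<le> 1"
    and "1 \<le> i" "i < n" "n - i \<le> k" "hit_prob {1..n} P n k i < 1"
  shows "hit_prob {1..n} P n k i < hit_prob {1..n} (mix P (shift_right n) e) n k i"
  using assms(4-7)
proof (induction k arbitrary: i)
  case (Suc k)
  let ?Q = "mix P (shift_right n) e"
  let ?h = "hit_prob {1..n} P n (Suc k) i"
  have i: "i \<in> {1..n}"
    using Suc.prems by simp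
  have avg: "?h \<le> (\<Sum>l\<in>{1..n}. P i l * reach_prob {1..n} ?Q n k l)"
    using hit_prob_le_mix_shift_right[OF P _ assms(3)] assms(2)
    by (intro hit_prob_Suc_le_row_avg_reach_prob[OF P i]) simp
  have "?h < reach_prob {1..n} ?Q n k (i + 1)"
  proof (cases "i + 1 = n")
    case True
    then show ?thesis
      using Suc.prems by (simp add: reach_prob_def)
  next
    case False
    then have next_in: "i + 1 < n"
      using Suc.prems by simp
    have "?h \<le> hit_prob {1..n} P n k (i + 1)"
      using hit_prob_Suc_le_reach_prob_next[OF P, of i k] Suc.prems next_in
      by (simp add: reach_prob_def)
    moreover have "hit_prob {1..n} P n k (i + 1) \<le> hit_prob {1..n} ?Q n k (i + 1)"
      using hit_prob_le_mix_shift_right[OF P _ assms(3), of "i + 1" k] assms(2) next_in by simp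
    moreover have "hit_prob {1..n} P n k (i + 1) < hit_prob {1..n} ?Q n k (i + 1)"
      if "hit_prob {1..n} P n k (i + 1) < 1"
      using Suc.IH[of "i + 1"] that Suc.prems next_in by simp
    ultimately show ?thesis
      using Suc.prems next_in by (fastforce simp: reach_prob_def)
  qed
  from avg this assms(2,3) have "?h < (1 - e) * (\<Sum>l\<in>{1..n}. P i l * reach_prob {1..n} ?Q n k l)
      + e * reach_prob {1..n} ?Q n k (i + 1)"
    by (rule less_convex_comb)
  then show ?case
    unfolding hit_prob_mix_shift_right_Suc[OF i] using Suc.prems by simp
qed simp

lemma exists_strategy_beating_to_end:
  assumes P: "line_strategy n P" and "3 \<le> n" "n - 1 \<le> \<tau>"
    and less: "hit_prob {1..n} P n \<tau> 1 < hit_prob {1..n} P 1 \<tau> n"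
  shows "\<exists>Q. line_strategy n Q \<and> hit_prob {1..n} P n \<tau> 1 < min_hit {1..n} Q \<tau>"
proof -
  let ?Q = "\<lambda>e. mix P (shift_right n) e"
  let ?f = "hit_prob {1..n} P n \<tau> 1"
  have "((\<lambda>e. hit_prob {1..n} (?Q e) 1 \<tau> n) \<longlongrightarrow> hit_prob {1..n} P 1 \<tau> n) (at_right 0)"
    using isCont_hit_prob_mix[where V = "{1..n}" and Q = "shift_right n" and x = 0]
    by (simp add: isCont_def filterlim_at_split mix_0)
  then have "\<forall>\<^sub>F e in at_right 0. ?f < hit_prob {1..n} (?Q e) 1 \<tau> n"
    using less by (rule order_tendstoD)
  moreover have "\<forall>\<^sub>F e in at_right 0. 0 < e \<and> e < (1::real)"
    by (auto simp: eventually_at_right_field intro!: exI[of _ 1])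
  ultimately have "\<forall>\<^sub>F e in at_right 0. 0 < e \<and> e < 1 \<and> ?f < hit_prob {1..n} (?Q e) 1 \<tau> n"
    by eventually_elim auto
  then obtain e where e: "0 < e" "e < 1" and to_start: "?f < hit_prob {1..n} (?Q e) 1 \<tau> n"
    using eventually_happens'[OF trivial_limit_at_right_real] by blast
  have "hit_prob {1..n} P 1 \<tau> n \<le> 1"
    using hit_prob_le_1[OF P] assms(2) by simp
  then have "?f < hit_prob {1..n} (?Q e) n \<tau> 1"
    using hit_prob_less_mix_shift_right[OF P e(1), of 1 \<tau>] e less assms(2,3) by simp
  moreover have Q: "line_strategy n (?Q e)"
    using conforming_mix[OF P line_strategy_shift_right] e by simp
  moreover have "1 \<le> \<tau>"
    using assms(2,3) by simp
  ultimately have "?f < min_hit {1..n} (?Q e) \<tau>"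
    using to_start min_ends_le_min_hit[OF Q assms(2)] by fastforce
  with Q show ?thesis
    by blast
qed

lemma unbalanced_strategy_not_optimal:
  assumes P: "line_strategy n P" and "3 \<le> n" "n - 1 \<le> \<tau>"
    and "hit_prob {1..n} P n \<tau> 1 \<noteq> hit_prob {1..n} P 1 \<tau> n"
  shows "\<exists>Q. line_strategy n Q \<and> min_hit {1..n} P \<tau> < min_hit {1..n} Q \<tau>"
proof (cases "hit_prob {1..n} P n \<tau> 1 < hit_prob {1..n} P 1 \<tau> n")
  case True
  moreover have "min_hit {1..n} P \<tau> \<le> hit_prob {1..n} P n \<tau> 1"
    using assms(2) by (intro min_hit_le_hit_prob) auto
  ultimately show ?thesis
    using exists_strategy_beating_to_end[OF assms(1-3)] by fastforce
next
  case False
  have reflect_ends: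
    "hit_prob {1..n} (reflect n P) n \<tau> 1 = hit_prob {1..n} P 1 \<tau> n"
    "hit_prob {1..n} (reflect n P) 1 \<tau> n = hit_prob {1..n} P n \<tau> 1"
    using hit_prob_reflect_ends[where n = n and P = P and k = \<tau>] assms(2) by simp_all
  with False assms(4)
  have "hit_prob {1..n} (reflect n P) n \<tau> 1 < hit_prob {1..n} (reflect n P) 1 \<tau> n"
    by simp
  moreover have "min_hit {1..n} P \<tau> \<le> hit_prob {1..n} P 1 \<tau> n"
    using assms(2) by (intro min_hit_le_hit_prob) auto
  ultimately show ?thesis
    using exists_strategy_beating_to_end[OF line_strategy_reflect[OF P] assms(2,3)]
    unfolding reflect_ends by fastforce
qed

theorem lemma6:
  fixes n \<tau> :: nat and Pstar :: "nat \<Rightarrow> nat \<Rightarrow> real"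
  assumes "n \<ge> 3"
    and "n - 1 \<le> \<tau>" and "\<tau> \<le> 2 * n - 3"
    and "conforming {1..n} (line_graph_edges n) Pstar"
    and "\<forall>P. conforming {1..n} (line_graph_edges n) P \<longrightarrow>
               min_hit {1..n} P \<tau> \<le> min_hit {1..n} Pstar \<tau>"
  shows "hit_prob {1..n} Pstar n \<tau> 1 = hit_prob {1..n} Pstar 1 \<tau> n"
proof (rule ccontr)
  assume "hit_prob {1..n} Pstar n \<tau> 1 \<noteq> hit_prob {1..n} Pstar 1 \<tau> n"
  then obtain Q where "line_strategy n Q" "min_hit {1..n} Pstar \<tau> < min_hit {1..n} Q \<tau>"
    using unbalanced_strategy_not_optimal assms(1,2,4) by blast
  with assms(5) show False
    by fastforce
qed

end
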